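(* Let $\mathbf V=(V,\pi)$ be a persistence module of finite type over $\mathbb Z/2$, and assume that the barcode of $\mathbf V$ contains a bar of the form $(a,b]$ or of the form $(a,\infty)$; in the latter case set $b=\infty$. Then for every $\delta>0$ there exists $x\in V_{a+\delta}$ such that: (i) $\pi_{a+\delta,s}\,x\neq0$ for all $s$ with $a+\delta\le s\le b$; (ii) for all $s$ with $a+\delta\le s\le b$ and all $\sigma\le a$, $\pi_{a+\delta,s}\,x\notin\operatorname{im}\pi_{\sigma,s}$.
   Context: A persistence module $\mathbf V$ consists of finite-dimensional $\mathbb Z/2$-vector spaces $V_t$, $t\in\mathbb R$, and linear maps $\pi_{s,t}:V_s\to V_t$ for $s\le t$ with $\pi_{t,t}=\mathrm{Id}$ and $\pi_{s,t}=\pi_{r,t}\circ\pi_{s,r}$ for $s\le r\le t$. It is of finite type if there is a discrete closed set $\operatorname{spec}(\mathbf V)=\{t_0<t_1<\dots\}$ with $t_0>-\infty$ such that $\pi_{s,t}$ is an isomorphism for $s\le t$ in a neighborhood of any point outside the spectrum, and for $s\le t$ in $(r-\epsilon,r]$ for each spectral point $r$ and some $\epsilon>0$, and $V_t=0$ for $t\le t_0$. For an interval $\mathbb J$ of the form $(a,b]$ or $(a,\infty)$, the interval module $\mathbf Q(\mathbb J)$ has $Q_t=\mathbb Z/2$ for $t\in\mathbb J$, $0$ otherwise, with $\pi_{s,t}=\mathrm{Id}$ for $s,t\in\mathbb J$ and $0$ otherwise. By the structure theorem, a finite-type module is isomorphic to $\bigoplus_j\mathbf Q(\mathbb J_j)$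 for a unique multiset of intervals (each appearing finitely often), its barcode. *)

theory Defs
  imports "HOL-Library.Z2" "HOL-Library.Extended_Real"
begin

text \<open>A persistence module over Z/2 is modelled as a family of subspaces V t of an
ambient Z/2-vector space (type 'v with scalar multiplication scale by bit = Z/2),
together with maps \<pi> s t (meaningful for s \<le> t) that are linear from V s to V t.\<close>

definition persistence_module ::
  "(bit \<Rightarrow> 'v::ab_group_add \<Rightarrow> 'v) \<Rightarrow> (real \<Rightarrow> 'v set) \<Rightarrow> (real \<Rightarrow> real \<Rightarrow> 'v \<Rightarrow> 'v) \<Rightarrow> bool"
where
  "persistence_module scale V \<pi> \<longleftrightarrow>
     vector_space scale \<and>
     (\<forall>t. module.subspace scale (V t) \<and>
          (\<exists>B. finite B \<and> B \<subseteq> V t \<and> module.span scale B = V t)) \<and>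
     (\<forall>s t. s \<le> t \<longrightarrow>
          \<pi> s t ` V s \<subseteq> V t \<and>
          (\<forall>x\<in>V s. \<forall>y\<in>V s. \<pi> s t (x + y) = \<pi> s t x + \<pi> s t y) \<and>
          (\<forall>c. \<forall>x\<in>V s. \<pi> s t (scale c x) = scale c (\<pi> s t x))) \<and>
     (\<forall>t. \<forall>x\<in>V t. \<pi> t t x = x) \<and>
     (\<forall>s r t. \<forall>x\<in>V s. s \<le> r \<longrightarrow> r \<le> t \<longrightarrow> \<pi> s t x = \<pi> r t (\<pi> s r x))"

definition pm_iso_on :: "(real \<Rightarrow> 'v set) \<Rightarrow> (real \<Rightarrow> real \<Rightarrow> 'v \<Rightarrow> 'v) \<Rightarrow> real \<Rightarrow> real \<Rightarrow> bool"
  where "pm_iso_on V \<pi> s t \<longleftrightarrow> bij_betw (\<pi> s t) (V s) (V t)"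

definition finite_type ::
  "(real \<Rightarrow> 'v::ab_group_add set) \<Rightarrow> (real \<Rightarrow> real \<Rightarrow> 'v \<Rightarrow> 'v) \<Rightarrow> bool"
where
  "finite_type V \<pi> \<longleftrightarrow>
     (\<exists>S t0. t0 \<in> S \<and> (\<forall>s\<in>S. t0 \<le> s) \<and> (\<forall>r. finite {s\<in>S. s \<le> r}) \<and>
        (\<forall>r. r \<notin> S \<longrightarrow> (\<exists>e>0. \<forall>s t. r - e < s \<longrightarrow> s \<le> t \<longrightarrow> t < r + e \<longrightarrow> pm_iso_on V \<pi> s t)) \<and>
        (\<forall>r\<in>S. \<exists>e>0. \<forall>s t. r - e < s \<longrightarrow> s \<le> t \<longrightarrow> t \<le> r \<longrightarrow> pm_iso_on V \<pi> s t) \<and>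
        (\<forall>t. t \<le> t0 \<longrightarrow> V t = {0}))"

text \<open>Intervals (a,b] (b real) or (a,\<infinity>) (b = \<infinity>), encoded as a pair (a,b) with b::ereal.\<close>

definition ival :: "real \<times> ereal \<Rightarrow> real set"
  where "ival I = {t. fst I < t \<and> ereal t \<le> snd I}"

text \<open>Direct sum of interval modules Q(I j), j \<in> J, with Z/2 coefficients.\<close>

definition bsum_space :: "nat set \<Rightarrow> (nat \<Rightarrow> real \<times> ereal) \<Rightarrow> real \<Rightarrow> (nat \<Rightarrow> bit) set"
  where "bsum_space J I t = {f. \<forall>j. f j \<noteq> 0 \<longrightarrow> j \<in> J \<and> t \<in> ival (I j)}"

definition bsum_map :: "(nat \<Rightarrow> real \<times> ereal) \<Rightarrow> real \<Rightarrow> real \<Rightarrow> (nat \<Rightarrow> bit) \<Rightarrow> (nat \<Rightarrow> bit)"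
  where "bsum_map I s t f = (\<lambda>j. if s \<in> ival (I j) \<and> t \<in> ival (I j) then f j else 0)"

definition barcode_decomposition ::
  "(bit \<Rightarrow> 'v::ab_group_add \<Rightarrow> 'v) \<Rightarrow> (real \<Rightarrow> 'v set) \<Rightarrow> (real \<Rightarrow> real \<Rightarrow> 'v \<Rightarrow> 'v)
   \<Rightarrow> nat set \<Rightarrow> (nat \<Rightarrow> real \<times> ereal) \<Rightarrow> bool"
where
  "barcode_decomposition scale V \<pi> J I \<longleftrightarrow>
     (\<forall>j\<in>J. ereal (fst (I j)) < snd (I j)) \<and>
     (\<exists>phi :: real \<Rightarrow> 'v \<Rightarrow> (nat \<Rightarrow> bit).
        (\<forall>t. bij_betw (phi t) (V t) (bsum_space J I t)) \<and>
        (\<forall>t. \<forall>x\<in>V t. \<forall>y\<in>V t. phi t (x + y) = (\<lambda>j. phi t x j + phi t y j)) \<and>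
        (\<forall>t c. \<forall>x\<in>V t. phi t (scale c x) = (\<lambda>j. c * phi t x j)) \<and>
        (\<forall>s t. s \<le> t \<longrightarrow> (\<forall>x\<in>V s. phi t (\<pi> s t x) = bsum_map I s t (phi s x))))"

definition has_bar ::
  "(bit \<Rightarrow> 'v::ab_group_add \<Rightarrow> 'v) \<Rightarrow> (real \<Rightarrow> 'v set) \<Rightarrow> (real \<Rightarrow> real \<Rightarrow> 'v \<Rightarrow> 'v)
   \<Rightarrow> real \<Rightarrow> ereal \<Rightarrow> bool"
where
  "has_bar scale V \<pi> a b \<longleftrightarrow>
     (\<exists>J I. barcode_decomposition scale V \<pi> J I \<and> (\<exists>j\<in>J. I j = (a, b)))"

end

theory Submission
  imports Defs
begin

text \<open>Read V through the isomorphism \<open>\<phi>\<close> with the direct sum of interval modules and look at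
the coordinate j of the bar (a,b]. The element of V(a+\<delta>) whose image is the j-th unit vector
keeps j-coordinate 1 along (a,b], whereas anything coming from V \<sigma> with \<sigma> \<le> a has j-coordinate 0,
because \<sigma> lies outside (a,b].\<close>

locale interval_decomposition =
  fixes V :: "real \<Rightarrow> 'v::ab_group_add set" and \<pi> :: "real \<Rightarrow> real \<Rightarrow> 'v \<Rightarrow> 'v"
    and J :: "nat set" and I :: "nat \<Rightarrow> real \<times> ereal"
    and \<phi> :: "real \<Rightarrow> 'v \<Rightarrow> nat \<Rightarrow> bit"
  assumes maps_into: "s \<le> t \<Longrightarrow> x \<in> V s \<Longrightarrow> \<pi> s t x \<in> V t"
    and bij: "bij_betw (\<phi> t) (V t) (bsum_space J I t)"
    and additive: "x \<in> V t \<Longrightarrow> y \<in> V t \<Longrightarrow> \<phi> t (x + y) = (\<lambda>j. \<phi> t x j + \<phi> t y j)"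
    and natural: "s \<le> t \<Longrightarrow> x \<in> V s \<Longrightarrow> \<phi> t (\<pi> s t x) = bsum_map I s t (\<phi> s x)"
begin

lemma surj_onto_bsum_space:
  assumes "f \<in> bsum_space J I t"
  obtains x where "x \<in> V t" "\<phi> t x = f"
proof -
  have "f \<in> \<phi> t ` V t"
    using assms bij[of t] by (simp add: bij_betw_def)
  then show thesis
    using that by blast
qed

lemma V_nonempty: "V t \<noteq> {}"
proof -
  have "(\<lambda>_. 0) \<in> bsum_space J I t"
    unfolding bsum_space_def by simp
  then obtain x where "x \<in> V t"
    by (rule surj_onto_bsum_space)
  then show ?thesis
    by blast
qed

lemma nonzero_if_coordinate_nonzero:
  assumes "x \<in> V t" "\<phi> t x j \<noteq> 0"
  shows "x \<noteq> 0"
proof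
  assume "x = 0"
  then have "\<phi> t x j = \<phi> t x j + \<phi> t x j"
    using additive[OF assms(1) assms(1)] by (metis add.right_neutral)
  with assms(2) show False
    by simp
qed

lemma coordinate_persists:
  assumes "t \<le> s" "t \<in> ival (I j)" "s \<in> ival (I j)" "x \<in> V t"
  shows "\<phi> s (\<pi> t s x) j = \<phi> t x j"
  using assms by (simp add: natural bsum_map_def)

lemma coordinate_born_before_bar:
  assumes "\<sigma> \<le> s" "\<sigma> \<le> fst (I j)" "y \<in> V \<sigma>"
  shows "\<phi> s (\<pi> \<sigma> s y) j = 0"
  using assms by (simp add: natural bsum_map_def ival_def)

lemma bar_generator:
  assumes "j \<in> J" "t \<in> ival (I j)"
  obtains x where "x \<in> V t" "\<And>s. t \<le> s \<Longrightarrow> s \<in> ival (I j) \<Longrightarrow> \<phi> s (\<pi> t s x) j = 1"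
proof -
  have "(\<lambda>i. if i = j then 1 else 0) \<in> bsum_space J I t"
    using assms unfolding bsum_space_def by auto
  then obtain x where x: "x \<in> V t" "\<phi> t x = (\<lambda>i. if i = j then 1 else 0)"
    by (rule surj_onto_bsum_space)
  show thesis
  proof (rule that)
    show "\<phi> s (\<pi> t s x) j = 1" if "t \<le> s" "s \<in> ival (I j)" for s
      using coordinate_persists[OF that(1) assms(2) that(2) x(1)] x(2) by simp
  qed (fact x(1))
qed

lemma bar_generator_outside_earlier_images:
  assumes "j \<in> J" "t \<in> ival (I j)"
  obtains x where "x \<in> V t"
    and "\<And>s. t \<le> s \<Longrightarrow> s \<in> ival (I j) \<Longrightarrow> \<pi> t s x \<noteq> 0"
    and "\<And>s \<sigma>. t \<le> s \<Longrightarrow> s \<in> ival (I j) \<Longrightarrow> \<sigma> \<le> fst (I j) \<Longrightarrow> \<pi> t s x \<notin> \<pi> \<sigma> s ` V \<sigma>"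
proof -
  obtain x where x: "x \<in> V t" and one: "\<And>s. t \<le> s \<Longrightarrow> s \<in> ival (I j) \<Longrightarrow> \<phi> s (\<pi> t s x) j = 1"
    using bar_generator[OF assms] by blast
  show thesis
  proof (rule that[OF x])
    fix s assume s: "t \<le> s" "s \<in> ival (I j)"
    show "\<pi> t s x \<noteq> 0"
      using nonzero_if_coordinate_nonzero[OF maps_into[OF s(1) x]] one[OF s] by simp
    fix \<sigma> assume \<sigma>: "\<sigma> \<le> fst (I j)"
    with s(2) have "\<sigma> \<le> s"
      by (simp add: ival_def)
    show "\<pi> t s x \<notin> \<pi> \<sigma> s ` V \<sigma>"
    proof
      assume "\<pi> t s x \<in> \<pi> \<sigma> s ` V \<sigma>"
      then obtain y where "y \<in> V \<sigma>" "\<pi> t s x = \<pi> \<sigma> s y"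
        by blast
      then show False
        using coordinate_born_before_bar[OF \<open>\<sigma> \<le> s\<close> \<sigma>] one[OF s] by simp
    qed
  qed
qed

end

lemma persistence_module_maps_into:
  assumes "persistence_module scale V \<pi>" "s \<le> t" "x \<in> V s"
  shows "\<pi> s t x \<in> V t"
  using assms unfolding persistence_module_def by blast

lemma barcode_decomposition_interval_decomposition:
  fixes V :: "real \<Rightarrow> 'v::ab_group_add set"
  assumes "persistence_module scale V \<pi>" "barcode_decomposition scale V \<pi> J I"
  obtains \<phi> where "interval_decomposition V \<pi> J I \<phi>"
proof -
  obtain \<phi> :: "real \<Rightarrow> 'v \<Rightarrow> nat \<Rightarrow> bit"
    where bij: "\<And>t. bij_betw (\<phi> t) (V t) (bsum_space J I t)"
      and additive: "\<And>t x y. x \<in> V t \<Longrightarrow> y \<in> V t \<Longrightarrow> \<phi> t (x + y) = (\<lambda>j. \<phi> t x j + \<phi> t y j)"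
      and natural: "\<And>s t x. s \<le> t \<Longrightarrow> x \<in> V s \<Longrightarrow> \<phi> t (\<pi> s t x) = bsum_map I s t (\<phi> s x)"
    using assms(2) unfolding barcode_decomposition_def by metis
  have "interval_decomposition V \<pi> J I \<phi>"
    by unfold_locales (fact persistence_module_maps_into[OF assms(1)] bij additive natural)+
  then show thesis
    by (rule that)
qed

theorem lemma3p4:
  fixes scale :: "bit \<Rightarrow> 'v::ab_group_add \<Rightarrow> 'v"
    and V :: "real \<Rightarrow> 'v set" and \<pi> :: "real \<Rightarrow> real \<Rightarrow> 'v \<Rightarrow> 'v"
    and a :: real and b :: ereal and \<delta> :: real
  assumes "persistence_module scale V \<pi>"
    and "finite_type V \<pi>"
    and "has_bar scale V \<pi> a b"
    and "\<delta> > 0"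
  shows "\<exists>x\<in>V (a + \<delta>).
           (\<forall>s. a + \<delta> \<le> s \<and> ereal s \<le> b \<longrightarrow> \<pi> (a + \<delta>) s x \<noteq> 0) \<and>
           (\<forall>s \<sigma>. a + \<delta> \<le> s \<and> ereal s \<le> b \<and> \<sigma> \<le> a \<longrightarrow> \<pi> (a + \<delta>) s x \<notin> \<pi> \<sigma> s ` V \<sigma>)"
proof -
  obtain J I j where "j \<in> J" and bar: "I j = (a, b)" and "barcode_decomposition scale V \<pi> J I"
    using assms(3) unfolding has_bar_def by blast
  then obtain \<phi> where "interval_decomposition V \<pi> J I \<phi>"
    using barcode_decomposition_interval_decomposition assms(1) by blast
  then interpret interval_decomposition V \<pi> J I \<phi> .
  show ?thesis
  proof (cases "ereal (a + \<delta>) \<le> b")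
    case False
    obtain x where "x \<in> V (a + \<delta>)"
      using V_nonempty by blast
    moreover have "\<not> (a + \<delta> \<le> s \<and> ereal s \<le> b)" for s
      using False order_trans[of "ereal (a + \<delta>)" "ereal s" b] by auto
    ultimately show ?thesis
      by blast
  next
    case True
    have in_bar: "s \<in> ival (I j)" if "a + \<delta> \<le> s" "ereal s \<le> b" for s
      using that assms(4) by (simp add: ival_def bar)
    obtain x where "x \<in> V (a + \<delta>)"
      and "\<And>s. a + \<delta> \<le> s \<Longrightarrow> s \<in> ival (I j) \<Longrightarrow> \<pi> (a + \<delta>) s x \<noteq> 0"
      and "\<And>s \<sigma>. a + \<delta> \<le> s \<Longrightarrow> s \<in> ival (I j) \<Longrightarrow> \<sigma> \<le> a \<Longrightarrow> \<pi> (a + \<delta>) s x \<notin> \<pi> \<sigma> s ` V \<sigma>"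
      using bar_generator_outside_earlier_images[OF \<open>j \<in> J\<close> in_bar[OF order.refl True]] bar by auto
    then show ?thesis
      using in_bar by blast
  qed
qed

end
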